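(* Let $Y$ be a set and $y\in Y$. The centralizer of $y$ in $R\mathfrak L[Y]$ is exactly the Lie ideal $\langle y\rangle$ of $R\mathfrak L[Y]$ generated by $y$.
   Context: $R\mathfrak L[Y]$ is the Lie ring generated by $Y$ subject to $[y_1,[y_2,[\cdots[y_{s-1},y_s]\cdots]]]=0$ for every $s\geq2$ and every $(y_1,\dots,y_s)\in Y^s$ with $y_i=y_j$ for some $i\neq j$. The centralizer of $y$ is $\{u\in R\mathfrak L[Y]:[u,y]=0\}$. *)

theory Defs
  imports "HOL-Library.Poly_Mapping"
begin

text \<open>The generating set Y is represented by the type 'a (Y = UNIV).
  The free non-associative ring over Y has as Z-basis the binary bracket
  trees (magma words) with leaves in Y.\<close>

datatype 'a btree = Leaf 'a | Br "'a btree" "'a btree"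

type_synonym 'a magring = "'a btree \<Rightarrow>\<^sub>0 int"

definition gen :: "'a \<Rightarrow> 'a magring" where
  "gen y = Poly_Mapping.single (Leaf y) 1"

definition br :: "'a magring \<Rightarrow> 'a magring \<Rightarrow> 'a magring" where
  "br p q = (\<Sum>s\<in>Poly_Mapping.keys p. \<Sum>t\<in>Poly_Mapping.keys q.
       Poly_Mapping.single (Br s t) (Poly_Mapping.lookup p s * Poly_Mapping.lookup q t))"

inductive_set ideal_gen :: "'a magring set \<Rightarrow> 'a magring set" for S where
  base: "x \<in> S \<Longrightarrow> x \<in> ideal_gen S"
| zero: "0 \<in> ideal_gen S"
| add: "x \<in> ideal_gen S \<Longrightarrow> z \<in> ideal_gen S \<Longrightarrow> x + z \<in> ideal_gen S"
| neg: "x \<in> ideal_gen S \<Longrightarrow> - x \<in> ideal_gen S"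
| left: "x \<in> ideal_gen S \<Longrightarrow> br z x \<in> ideal_gen S"
| right: "x \<in> ideal_gen S \<Longrightarrow> br x z \<in> ideal_gen S"

fun rnorm :: "'a list \<Rightarrow> 'a magring" where
  "rnorm [] = 0"
| "rnorm [y] = gen y"
| "rnorm (y # ys) = br (gen y) (rnorm ys)"

text \<open>Defining relations of R L[Y]: Lie ring axioms (alternating, Jacobi)
  plus the vanishing of right-normed brackets with a repeated generator.\<close>
definition RL_rels :: "'a magring set" where
  "RL_rels = {br u u | u. True}
     \<union> {br u (br v w) + br v (br w u) + br w (br u v) | u v w. True}
     \<union> {rnorm ys | ys. 2 \<le> length ys \<and> \<not> distinct ys}"

text \<open>Kernel of the projection from the free non-associative ring onto R L[Y];
  R L[Y] is the quotient by this ideal.\<close>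
definition RL_kernel :: "'a magring set" where
  "RL_kernel = ideal_gen RL_rels"

text \<open>Representatives (preimages) of the centralizer of y in R L[Y].\<close>
definition RL_centralizer :: "'a \<Rightarrow> 'a magring set" where
  "RL_centralizer y = {u. br u (gen y) \<in> RL_kernel}"

text \<open>Representatives (preimage) of the Lie ideal of R L[Y] generated by y.\<close>
definition RL_lie_ideal_gen :: "'a \<Rightarrow> 'a magring set" where
  "RL_lie_ideal_gen y = ideal_gen (insert (gen y) RL_kernel)"

end

theory Submission
  imports Defs "HOL-Library.Multiset"
begin

text \<open>Modulo the kernel, the right-normed brackets of words ending in y span a Lie ideal
  (Jacobi moves any bracket tree into right-normed form without changing the last letter),
  and each of them commutes with y, since [y, [.., y]] has a repeated letter. Conversely,
  expand Lie elements as integer functions on words, multiplied by concatenation but with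
  every word containing a repeated letter set to zero; this expansion kills the kernel.
  Over finitely many letters, modulo the kernel every element is the combination of the
  right-normed brackets of distinct words W ending in a fixed letter of W, with coefficient
  the value of the expansion at W. If u commutes with y, the value of the expansion of
  [u, y] at the word W y is the value of the expansion of u at W whenever y does not occur
  in W; so only words containing y survive, and their brackets lie in the ideal.\<close>

lemma lookup_br:
  "Poly_Mapping.lookup (br p q) w = (case w of Leaf _ \<Rightarrow> 0
     | Br s t \<Rightarrow> Poly_Mapping.lookup p s * Poly_Mapping.lookup q t)"
proof -
  have "Poly_Mapping.lookup (br p q) w = (\<Sum>s\<in>Poly_Mapping.keys p. \<Sum>t\<in>Poly_Mapping.keys q.
      (Poly_Mapping.lookup p s * Poly_Mapping.lookup q t when Br s t = w))"
    unfolding br_def by (simp add: lookup_sum lookup_single)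
  also have "\<dots> = (case w of Leaf _ \<Rightarrow> 0
     | Br s t \<Rightarrow> Poly_Mapping.lookup p s * Poly_Mapping.lookup q t)"
  proof (cases w)
    case (Leaf x)
    then show ?thesis by simp
  next
    case (Br s0 t0)
    have "(\<Sum>s\<in>Poly_Mapping.keys p. \<Sum>t\<in>Poly_Mapping.keys q.
        (Poly_Mapping.lookup p s * Poly_Mapping.lookup q t when Br s t = w))
      = (\<Sum>s\<in>Poly_Mapping.keys p. (Poly_Mapping.lookup p s * Poly_Mapping.lookup q t0 when s = s0))"
    proof (rule sum.cong[OF refl])
      fix s
      show "(\<Sum>t\<in>Poly_Mapping.keys q. (Poly_Mapping.lookup p s * Poly_Mapping.lookup q t when Br s t = w))
        = (Poly_Mapping.lookup p s * Poly_Mapping.lookup q t0 when s = s0)"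
        using Br by (cases "t0 \<in> Poly_Mapping.keys q") (auto simp: when_def in_keys_iff intro!: sum.neutral)
    qed
    also have "\<dots> = Poly_Mapping.lookup p s0 * Poly_Mapping.lookup q t0"
      by (cases "s0 \<in> Poly_Mapping.keys p") (auto simp: when_def in_keys_iff)
    finally show ?thesis using Br by simp
  qed
  finally show ?thesis .
qed

lemma br_add_left: "br (a + b) c = br a c + br b c"
  by (rule poly_mapping_eqI) (simp add: lookup_br lookup_add distrib_right split: btree.split)

lemma br_add_right: "br c (a + b) = br c a + br c b"
  by (rule poly_mapping_eqI) (simp add: lookup_br lookup_add distrib_left split: btree.split)

lemma br_minus_left: "br (- a) c = - br a c"
  by (rule poly_mapping_eqI) (simp add: lookup_br split: btree.split)

lemma br_minus_right: "br c (- a) = - br c a"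
  by (rule poly_mapping_eqI) (simp add: lookup_br split: btree.split)

lemma br_diff_left: "br (a - b) c = br a c - br b c"
  using br_add_left[of a "- b" c] br_minus_left[of b c] by simp

lemma br_diff_right: "br c (a - b) = br c a - br c b"
  using br_add_right[of c a "- b"] br_minus_right[of c b] by simp

lemma br_zero_left [simp]: "br 0 c = 0"
  by (rule poly_mapping_eqI) (simp add: lookup_br split: btree.split)

lemma br_zero_right [simp]: "br c 0 = 0"
  by (rule poly_mapping_eqI) (simp add: lookup_br split: btree.split)

lemma br_frag_of: "br (frag_of s) (frag_of t) = frag_of (Br s t)"
  by (rule poly_mapping_eqI) (auto simp: lookup_br split: btree.split)

lemma ideal_gen_diff: "a \<in> ideal_gen S \<Longrightarrow> b \<in> ideal_gen S \<Longrightarrow> a - b \<in> ideal_gen S"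
  using ideal_gen.add[OF _ ideal_gen.neg, of a S b] by simp

lemma ideal_gen_sum: "(\<And>x. x \<in> X \<Longrightarrow> f x \<in> ideal_gen S) \<Longrightarrow> sum f X \<in> ideal_gen S"
  by (induction X rule: infinite_finite_induct) (auto intro: ideal_gen.zero ideal_gen.add)

lemma single_in_ideal_gen:
  assumes "frag_of t \<in> ideal_gen S"
  shows "Poly_Mapping.single t c \<in> ideal_gen S"
proof -
  have nat_multiple: "Poly_Mapping.single t (int n) \<in> ideal_gen S" for n
  proof (induction n)
    case 0
    then show ?case by (simp add: ideal_gen.zero)
  next
    case (Suc n)
    have "Poly_Mapping.single t (int (Suc n)) = Poly_Mapping.single t (int n) + frag_of t"
      by (simp add: single_add[symmetric] add.commute)
    then show ?case using Suc assms by (simp add: ideal_gen.add)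
  qed
  show ?thesis
  proof (cases c rule: int_cases)
    case (nonneg n)
    then show ?thesis using nat_multiple by simp
  next
    case (neg n)
    then have "Poly_Mapping.single t c = - Poly_Mapping.single t (int (Suc n))"
      by (simp add: single_uminus[symmetric])
    then show ?thesis using nat_multiple ideal_gen.neg by metis
  qed
qed

lemmas RL_kernel_zero = ideal_gen.zero[where S = RL_rels, folded RL_kernel_def]
lemmas RL_kernel_add = ideal_gen.add[where S = RL_rels, folded RL_kernel_def]
lemmas RL_kernel_minus = ideal_gen.neg[where S = RL_rels, folded RL_kernel_def]
lemmas RL_kernel_diff = ideal_gen_diff[where S = RL_rels, folded RL_kernel_def]
lemmas RL_kernel_br_left = ideal_gen.left[where S = RL_rels, folded RL_kernel_def]
lemmas RL_kernel_br_right = ideal_gen.right[where S = RL_rels, folded RL_kernel_def]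
lemmas RL_rels_in_RL_kernel = ideal_gen.base[where S = RL_rels, folded RL_kernel_def]

lemma RL_kernel_anticommute: "br a b + br b a \<in> RL_kernel"
proof -
  have "br a b + br b a = br (a + b) (a + b) - br a a - br b b"
    by (simp add: br_add_left br_add_right algebra_simps)
  moreover have "br u u \<in> RL_kernel" for u
    by (rule RL_rels_in_RL_kernel) (auto simp: RL_rels_def)
  ultimately show ?thesis by (metis RL_kernel_diff)
qed

lemma RL_kernel_jacobi: "br (br a b) c - (br a (br b c) - br b (br a c)) \<in> RL_kernel"
proof -
  have "br a (br b c) + br b (br c a) + br c (br a b) \<in> RL_kernel"
    by (rule RL_rels_in_RL_kernel) (unfold RL_rels_def, blast)
  moreover have "br (br a b) c - (br a (br b c) - br b (br a c)) =
     - (br a (br b c) + br b (br c a) + br c (br a b)) + (br c (br a b) + br (br a b) c)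
     + br b (br c a + br a c)"
    by (simp add: br_add_right algebra_simps)
  ultimately show ?thesis
    by (metis RL_kernel_add RL_kernel_minus RL_kernel_anticommute RL_kernel_br_left)
qed

fun rnorm_tree :: "'a list \<Rightarrow> 'a btree" where
  "rnorm_tree [] = Leaf undefined"
| "rnorm_tree [x] = Leaf x"
| "rnorm_tree (x # xs) = Br (Leaf x) (rnorm_tree xs)"

fun leaves :: "'a btree \<Rightarrow> 'a list" where
  "leaves (Leaf x) = [x]"
| "leaves (Br s t) = leaves s @ leaves t"

lemma rnorm_eq_frag_of_rnorm_tree: "L \<noteq> [] \<Longrightarrow> rnorm L = frag_of (rnorm_tree L)"
  by (induction L rule: rnorm.induct) (auto simp: gen_def br_frag_of)

lemma leaves_rnorm_tree: "L \<noteq> [] \<Longrightarrow> leaves (rnorm_tree L) = L"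
  by (induction L rule: rnorm_tree.induct) auto

lemma leaves_nonempty: "leaves t \<noteq> []"
  by (induction t) auto

lemma rnorm_Cons: "L \<noteq> [] \<Longrightarrow> rnorm (x # L) = br (gen x) (rnorm L)"
  by (cases L) auto

inductive_set rnorm_span :: "('a list \<Rightarrow> bool) \<Rightarrow> 'a magring set" for P where
  kernel: "k \<in> RL_kernel \<Longrightarrow> k \<in> rnorm_span P"
| rnorm: "P L \<Longrightarrow> rnorm L \<in> rnorm_span P"
| add: "p \<in> rnorm_span P \<Longrightarrow> q \<in> rnorm_span P \<Longrightarrow> p + q \<in> rnorm_span P"
| neg: "p \<in> rnorm_span P \<Longrightarrow> - p \<in> rnorm_span P"

lemma rnorm_span_diff: "p \<in> rnorm_span P \<Longrightarrow> q \<in> rnorm_span P \<Longrightarrow> p - q \<in> rnorm_span P"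
  using rnorm_span.add[OF _ rnorm_span.neg, of p P q] by simp

lemma rnorm_span_modulo_kernel:
  assumes "p \<in> rnorm_span P" "p - q \<in> RL_kernel"
  shows "q \<in> rnorm_span P"
proof -
  have "q = p + - (p - q)" by simp
  then show ?thesis using assms by (metis rnorm_span.intros)
qed

lemma rnorm_span_mono: "p \<in> rnorm_span P \<Longrightarrow> (\<And>L. P L \<Longrightarrow> Q L) \<Longrightarrow> p \<in> rnorm_span Q"
  by (induction rule: rnorm_span.induct) (auto intro: rnorm_span.intros)

lemma rnorm_span_br_frag_of:
  "p \<in> rnorm_span (\<lambda>L. L \<noteq> [] \<and> last L = z \<and> mset L = M) \<Longrightarrow>
   br (frag_of a) p \<in> rnorm_span (\<lambda>L. L \<noteq> [] \<and> last L = z \<and> mset L = mset (leaves a) + M)"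
proof (induction a arbitrary: M p)
  case (Leaf x)
  from Leaf show ?case
  proof (induction rule: rnorm_span.induct)
    case (kernel k)
    then show ?case by (intro rnorm_span.kernel RL_kernel_br_left)
  next
    case (rnorm L)
    then have "br (frag_of (Leaf x)) (rnorm L) = rnorm (x # L)"
      by (simp add: rnorm_Cons gen_def)
    then show ?case using rnorm rnorm_span.rnorm[of _ "x # L"] by auto
  next
    case (add p q)
    then show ?case by (simp add: br_add_right rnorm_span.add)
  next
    case (neg p)
    then show ?case by (simp add: br_minus_right rnorm_span.neg)
  qed
next
  case (Br a1 a2)
  let ?span = "rnorm_span (\<lambda>L. L \<noteq> [] \<and> last L = z \<and> mset L = mset (leaves (Br a1 a2)) + M)"
  have "br (frag_of a1) (br (frag_of a2) p) \<in> ?span"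
    using Br.IH(1)[OF Br.IH(2)[OF Br.prems]] by (simp add: add.assoc)
  moreover have "br (frag_of a2) (br (frag_of a1) p) \<in> ?span"
    using Br.IH(2)[OF Br.IH(1)[OF Br.prems]] by (simp add: add_ac)
  moreover have "br (frag_of (Br a1 a2)) p
      - (br (frag_of a1) (br (frag_of a2) p) - br (frag_of a2) (br (frag_of a1) p)) \<in> RL_kernel"
    using RL_kernel_jacobi[of "frag_of a1" "frag_of a2" p] by (simp add: br_frag_of)
  then have "(br (frag_of a1) (br (frag_of a2) p) - br (frag_of a2) (br (frag_of a1) p))
      - br (frag_of (Br a1 a2)) p \<in> RL_kernel"
    by (metis RL_kernel_minus minus_diff_eq)
  ultimately show ?case by (rule rnorm_span_modulo_kernel[OF rnorm_span_diff])
qed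

lemma frag_of_in_rnorm_span:
  "z \<in> set (leaves t) \<Longrightarrow>
   frag_of t \<in> rnorm_span (\<lambda>L. L \<noteq> [] \<and> last L = z \<and> mset L = mset (leaves t))"
proof (induction t)
  case (Leaf x)
  then have "frag_of (Leaf x) = rnorm [z]" by (simp add: gen_def)
  then show ?case using Leaf rnorm_span.rnorm[of _ "[z]"] by auto
next
  case (Br a b)
  show ?case
  proof (cases "z \<in> set (leaves b)")
    case True
    from rnorm_span_br_frag_of[OF Br.IH(2)[OF True], of a] show ?thesis
      by (simp add: br_frag_of)
  next
    case False
    then have "z \<in> set (leaves a)" using Br.prems by simp
    from rnorm_span_br_frag_of[OF Br.IH(1)[OF this], of b]
    have "br (frag_of b) (frag_of a)
        \<in> rnorm_span (\<lambda>L. L \<noteq> [] \<and> last L = z \<and> mset L = mset (leaves (Br a b)))"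
      by (simp add: add_ac)
    then have "- br (frag_of b) (frag_of a)
        \<in> rnorm_span (\<lambda>L. L \<noteq> [] \<and> last L = z \<and> mset L = mset (leaves (Br a b)))"
      by (rule rnorm_span.neg)
    moreover have "- br (frag_of b) (frag_of a) - frag_of (Br a b)
        = - (br (frag_of b) (frag_of a) + br (frag_of a) (frag_of b))"
      by (simp add: br_frag_of)
    then have "- br (frag_of b) (frag_of a) - frag_of (Br a b) \<in> RL_kernel"
      by (simp only:) (intro RL_kernel_minus RL_kernel_anticommute)
    ultimately show ?thesis by (rule rnorm_span_modulo_kernel)
  qed
qed

abbreviation rnorm_span_ending :: "'a \<Rightarrow> 'a magring set" where
  "rnorm_span_ending y \<equiv> rnorm_span (\<lambda>L. L \<noteq> [] \<and> last L = y)"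

lemma rnorm_span_ending_br_frag_of:
  "p \<in> rnorm_span_ending y \<Longrightarrow> br (frag_of a) p \<in> rnorm_span_ending y"
proof (induction rule: rnorm_span.induct)
  case (kernel k)
  then show ?case by (intro rnorm_span.kernel RL_kernel_br_left)
next
  case (rnorm L)
  then have "rnorm L \<in> rnorm_span (\<lambda>L'. L' \<noteq> [] \<and> last L' = y \<and> mset L' = mset L)"
    by (intro rnorm_span.rnorm) simp
  from rnorm_span_br_frag_of[OF this, of a] show ?case
    by (rule rnorm_span_mono) simp
next
  case (add p q)
  then show ?case by (simp add: br_add_right rnorm_span.add)
next
  case (neg p)
  then show ?case by (simp add: br_minus_right rnorm_span.neg)
qed

lemma rnorm_span_ending_br_left:
  assumes "p \<in> rnorm_span_ending y"
  shows "br z p \<in> rnorm_span_ending y"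
  using subset_UNIV[of "Poly_Mapping.keys z"]
proof (induction z rule: frag_induction)
  case zero
  then show ?case by (simp add: rnorm_span.kernel RL_kernel_zero)
next
  case (one x)
  then show ?case using assms by (simp add: rnorm_span_ending_br_frag_of)
next
  case (diff a b)
  then show ?case by (simp add: br_diff_left rnorm_span_diff)
qed

lemma rnorm_span_ending_br_right:
  assumes "p \<in> rnorm_span_ending y"
  shows "br p z \<in> rnorm_span_ending y"
proof -
  have "- br z p \<in> rnorm_span_ending y"
    using assms by (intro rnorm_span.neg rnorm_span_ending_br_left)
  moreover have "- br z p - br p z \<in> RL_kernel"
    using RL_kernel_minus[OF RL_kernel_anticommute[of z p]] by simp
  ultimately show ?thesis by (rule rnorm_span_modulo_kernel)
qed

lemma RL_lie_ideal_gen_subset_rnorm_span_ending: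
  "RL_lie_ideal_gen y \<subseteq> rnorm_span_ending y"
proof
  fix x
  assume "x \<in> RL_lie_ideal_gen y"
  then show "x \<in> rnorm_span_ending y"
    unfolding RL_lie_ideal_gen_def
  proof (induction rule: ideal_gen.induct)
    case (base x)
    moreover have "rnorm [y] \<in> rnorm_span_ending y" by (rule rnorm_span.rnorm) simp
    ultimately show ?case by (auto intro: rnorm_span.kernel)
  qed (auto intro: rnorm_span.intros RL_kernel_zero
      rnorm_span_ending_br_left rnorm_span_ending_br_right)
qed

lemma rnorm_span_ending_subset_RL_centralizer:
  "rnorm_span_ending y \<subseteq> RL_centralizer y"
proof
  fix p
  assume "p \<in> rnorm_span_ending y"
  then have "br p (gen y) \<in> RL_kernel"
  proof (induction rule: rnorm_span.induct)
    case (kernel k)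
    then show ?case by (rule RL_kernel_br_right)
  next
    case (rnorm L)
    then have "y \<in> set L" by auto
    with rnorm have "2 \<le> length (y # L) \<and> \<not> distinct (y # L)" by (cases L) auto
    then have "rnorm (y # L) \<in> RL_kernel"
      by (intro RL_rels_in_RL_kernel) (unfold RL_rels_def, blast)
    then have "br (gen y) (rnorm L) \<in> RL_kernel" using rnorm by (simp add: rnorm_Cons)
    then have "- br (gen y) (rnorm L) + (br (gen y) (rnorm L) + br (rnorm L) (gen y))
        \<in> RL_kernel"
      by (intro RL_kernel_add RL_kernel_minus RL_kernel_anticommute)
    then show ?case by simp
  next
    case (add p q)
    then show ?case by (simp add: br_add_left RL_kernel_add)
  next
    case (neg p)
    then show ?case by (simp add: br_minus_left RL_kernel_minus)
  qed
  then show "p \<in> RL_centralizer y" by (simp add: RL_centralizer_def)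
qed

(* cprod f g W is the sum of f U * g V over all splittings W = U @ V. *)
fun cprod :: "('a list \<Rightarrow> int) \<Rightarrow> ('a list \<Rightarrow> int) \<Rightarrow> 'a list \<Rightarrow> int" where
  "cprod f g [] = f [] * g []"
| "cprod f g (x # W) = f [] * g (x # W) + cprod (\<lambda>V. f (x # V)) g W"

lemma cprod_linear_left:
  "cprod (\<lambda>V. a * f V + b * f' V) g W = a * cprod f g W + b * cprod f' g W"
  by (induction W arbitrary: f f') (auto simp: algebra_simps)

lemma cprod_linear_right:
  "cprod f (\<lambda>V. a * g V + b * g' V) W = a * cprod f g W + b * cprod f g' W"
  by (induction W arbitrary: f) (auto simp: algebra_simps)

lemma cprod_diff_left: "cprod (\<lambda>V. f V - f' V) g W = cprod f g W - cprod f' g W"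
  using cprod_linear_left[of 1 f "- 1" f'] by simp

lemma cprod_diff_right: "cprod f (\<lambda>V. g V - g' V) W = cprod f g W - cprod f g' W"
  using cprod_linear_right[of f 1 g "- 1" g'] by simp

lemma cprod_assoc: "cprod (cprod f g) h W = cprod f (cprod g h) W"
proof (induction W arbitrary: f g)
  case Nil
  then show ?case by simp
next
  case (Cons x W)
  have "cprod (cprod f g) h (x # W) = f [] * g [] * h (x # W)
      + cprod (\<lambda>V. f [] * g (x # V) + cprod (\<lambda>V. f (x # V)) g V) h W"
    by simp
  also have "\<dots> = f [] * g [] * h (x # W) + f [] * cprod (\<lambda>V. g (x # V)) h W
      + cprod (cprod (\<lambda>V. f (x # V)) g) h W"
    using cprod_linear_left[of "f []" "\<lambda>V. g (x # V)" 1 "cprod (\<lambda>V. f (x # V)) g" h W]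
    by simp
  also have "\<dots> = cprod f (cprod g h) (x # W)"
    using Cons.IH by (simp add: algebra_simps)
  finally show ?case .
qed

lemma cprod_cong_left:
  "(\<And>i. f (take i W) = f' (take i W)) \<Longrightarrow> cprod f g W = cprod f' g W"
proof (induction W arbitrary: f f')
  case Nil
  then show ?case using Nil[of 0] by simp
next
  case (Cons x W)
  have "f [] = f' []" using Cons.prems[of 0] by simp
  moreover have "cprod (\<lambda>V. f (x # V)) g W = cprod (\<lambda>V. f' (x # V)) g W"
    by (rule Cons.IH) (use Cons.prems[of "Suc i" for i] in simp)
  ultimately show ?case by simp
qed

lemma cprod_cong_right:
  "(\<And>i. g (drop i W) = g' (drop i W)) \<Longrightarrow> cprod f g W = cprod f g' W"
proof (induction W arbitrary: f)
  case Nil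
  then show ?case using Nil[of 0] by simp
next
  case (Cons x W)
  have "g (x # W) = g' (x # W)" using Cons.prems[of 0] by simp
  moreover have "cprod (\<lambda>V. f (x # V)) g W = cprod (\<lambda>V. f (x # V)) g' W"
    by (rule Cons.IH) (use Cons.prems[of "Suc i" for i] in simp)
  ultimately show ?case by simp
qed

lemma cprod_nonzero_split:
  "cprod f g W \<noteq> 0 \<Longrightarrow> \<exists>i. f (take i W) \<noteq> 0 \<and> g (drop i W) \<noteq> 0"
proof (induction W arbitrary: f)
  case Nil
  then show ?case by (intro exI[of _ 0]) auto
next
  case (Cons x W)
  show ?case
  proof (cases "f [] * g (x # W) = 0")
    case True
    then have "cprod (\<lambda>V. f (x # V)) g W \<noteq> 0" using Cons.prems by (metis add_0 cprod.simps(2))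
    from Cons.IH[OF this] obtain i where "f (x # take i W) \<noteq> 0 \<and> g (drop i W) \<noteq> 0"
      by blast
    then show ?thesis by (intro exI[of _ "Suc i"]) simp
  next
    case False
    then show ?thesis by (intro exI[of _ 0]) simp
  qed
qed

definition letter :: "'a \<Rightarrow> 'a list \<Rightarrow> int" where
  "letter x W = (if W = [x] then 1 else 0)"

lemma cprod_zero_left [simp]: "cprod (\<lambda>V. 0) g W = 0"
  using cprod_linear_left[of 0 "\<lambda>_. 0" 0 "\<lambda>_. 0" g W] by simp

lemma cprod_zero_right [simp]: "cprod f (\<lambda>V. 0) W = 0"
  using cprod_linear_right[of f 0 "\<lambda>_. 0" 0 "\<lambda>_. 0" W] by simp

lemma cprod_unit_left: "cprod (\<lambda>V. if V = [] then c else 0) f W = c * f W"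
  by (cases W) simp_all

lemma cprod_letter_left:
  "cprod (letter x) f W = (case W of [] \<Rightarrow> 0 | z # W' \<Rightarrow> if z = x then f W' else 0)"
proof (cases W)
  case Nil
  then show ?thesis by (simp add: letter_def)
next
  case (Cons z W')
  have "(\<lambda>V. letter x (z # V)) = (\<lambda>V. if V = [] then (if z = x then 1 else 0) else 0)"
    by (auto simp: letter_def)
  then show ?thesis using Cons by (simp add: letter_def cprod_unit_left)
qed

lemma cprod_letter_right:
  "cprod f (letter x) W = (if W \<noteq> [] \<and> last W = x then f (butlast W) else 0)"
  by (induction W arbitrary: f rule: induct_list012) (auto simp: letter_def)

definition dprod :: "('a list \<Rightarrow> int) \<Rightarrow> ('a list \<Rightarrow> int) \<Rightarrow> 'a list \<Rightarrow> int" where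
  "dprod f g W = (if distinct W then cprod f g W else 0)"

lemma dprod_assoc: "dprod (dprod f g) h W = dprod f (dprod g h) W"
proof (cases "distinct W")
  case True
  have "cprod (dprod f g) h W = cprod (cprod f g) h W"
    by (rule cprod_cong_left) (use True in \<open>simp add: dprod_def\<close>)
  moreover have "cprod f (dprod g h) W = cprod f (cprod g h) W"
    by (rule cprod_cong_right) (use True in \<open>simp add: dprod_def\<close>)
  ultimately show ?thesis using True by (simp add: dprod_def cprod_assoc)
qed (simp add: dprod_def)

lemma dprod_diff_left: "dprod (\<lambda>V. f V - f' V) g W = dprod f g W - dprod f' g W"
  by (simp add: dprod_def cprod_diff_left)

lemma dprod_diff_right: "dprod f (\<lambda>V. g V - g' V) W = dprod f g W - dprod f g' W"
  by (simp add: dprod_def cprod_diff_right)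

lemma dprod_mset_support:
  assumes "dprod f g W \<noteq> 0"
    and "\<And>U. f U \<noteq> 0 \<Longrightarrow> mset U = M"
    and "\<And>V. g V \<noteq> 0 \<Longrightarrow> mset V = N"
  shows "mset W = M + N \<and> distinct W"
proof -
  have "distinct W" and "cprod f g W \<noteq> 0"
    using assms(1) by (auto simp: dprod_def split: if_splits)
  from cprod_nonzero_split[OF this(2)] obtain i
    where "f (take i W) \<noteq> 0" "g (drop i W) \<noteq> 0" by blast
  then have "mset (take i W) = M" "mset (drop i W) = N" using assms(2,3) by blast+
  then have "mset W = M + N" by (metis append_take_drop_id mset_append)
  with \<open>distinct W\<close> show ?thesis by simp
qed

definition dbr :: "('a list \<Rightarrow> int) \<Rightarrow> ('a list \<Rightarrow> int) \<Rightarrow> 'a list \<Rightarrow> int" where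
  "dbr f g W = dprod f g W - dprod g f W"

lemma dbr_jacobi: "dbr a (dbr b c) W + dbr b (dbr c a) W + dbr c (dbr a b) W = 0"
  by (simp add: dbr_def[abs_def] dprod_diff_left dprod_diff_right dprod_assoc)

lemma dbr_self: "dbr a a W = 0"
  by (simp add: dbr_def)

lemma dbr_diff_left: "dbr (\<lambda>V. f V - f' V) g W = dbr f g W - dbr f' g W"
  by (simp add: dbr_def dprod_diff_left dprod_diff_right)

lemma dbr_diff_right: "dbr g (\<lambda>V. f V - f' V) W = dbr g f W - dbr g f' W"
  by (simp add: dbr_def dprod_diff_left dprod_diff_right)

fun expand_tree :: "'a btree \<Rightarrow> 'a list \<Rightarrow> int" where
  "expand_tree (Leaf x) = letter x"
| "expand_tree (Br s t) = dbr (expand_tree s) (expand_tree t)"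

definition expand :: "'a magring \<Rightarrow> 'a list \<Rightarrow> int" where
  "expand p W = (\<Sum>t\<in>Poly_Mapping.keys p. Poly_Mapping.lookup p t * expand_tree t W)"

lemma expand_superset:
  "finite B \<Longrightarrow> Poly_Mapping.keys p \<subseteq> B \<Longrightarrow>
   expand p W = (\<Sum>t\<in>B. Poly_Mapping.lookup p t * expand_tree t W)"
  unfolding expand_def by (rule sum.mono_neutral_left) (auto simp: in_keys_iff)

lemma expand_add: "expand (p + q) W = expand p W + expand q W"
proof -
  let ?B = "Poly_Mapping.keys p \<union> Poly_Mapping.keys q"
  have "expand (p + q) W = (\<Sum>t\<in>?B. Poly_Mapping.lookup (p + q) t * expand_tree t W)"
    by (rule expand_superset) (auto dest: subsetD[OF keys_add])
  also have "\<dots> = (\<Sum>t\<in>?B. Poly_Mapping.lookup p t * expand_tree t W)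
       + (\<Sum>t\<in>?B. Poly_Mapping.lookup q t * expand_tree t W)"
    by (simp add: lookup_add distrib_right sum.distrib)
  also have "\<dots> = expand p W + expand q W"
    by (simp add: expand_superset[of ?B p W] expand_superset[of ?B q W])
  finally show ?thesis .
qed

lemma expand_zero [simp]: "expand 0 W = 0"
  by (simp add: expand_def)

lemma expand_minus: "expand (- p) W = - expand p W"
  using expand_add[of p "- p" W] by simp

lemma expand_diff: "expand (p - q) W = expand p W - expand q W"
  using expand_add[of p "- q" W] expand_minus[of q W] by simp

lemma expand_frag_of: "expand (frag_of t) = expand_tree t"
  by (rule ext) (simp add: expand_def)

lemma expand_br: "expand (br p q) = dbr (expand p) (expand q)"
proof -
  have "expand (br p q) = dbr (expand p) (expand q)" for q
    using subset_UNIV[of "Poly_Mapping.keys p"]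
  proof (induction p rule: frag_induction)
    case zero
    then show ?case by (simp add: fun_eq_iff dbr_def dprod_def)
  next
    case (one s)
    show ?case
      using subset_UNIV[of "Poly_Mapping.keys q"]
    proof (induction q rule: frag_induction)
      case zero
      then show ?case by (simp add: fun_eq_iff dbr_def dprod_def)
    next
      case (one t)
      then show ?case by (simp add: br_frag_of expand_frag_of)
    next
      case (diff a b)
      then show ?case
        by (simp add: fun_eq_iff br_diff_right expand_diff dbr_diff_right[symmetric])
    qed
  next
    case (diff a b)
    then show ?case
      by (simp add: fun_eq_iff br_diff_left expand_diff dbr_diff_left[symmetric])
  qed
  then show ?thesis by simp
qed

lemma expand_tree_support:
  "expand_tree t W \<noteq> 0 \<Longrightarrow> mset W = mset (leaves t) \<and> distinct W"
proof (induction t arbitrary: W)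
  case (Leaf x)
  then show ?case by (auto simp: letter_def split: if_splits)
next
  case (Br s t)
  then have "dprod (expand_tree s) (expand_tree t) W \<noteq> 0
      \<or> dprod (expand_tree t) (expand_tree s) W \<noteq> 0"
    by (auto simp: dbr_def)
  then show ?case
  proof
    assume "dprod (expand_tree s) (expand_tree t) W \<noteq> 0"
    from dprod_mset_support[OF this] Br.IH show ?case by auto
  next
    assume "dprod (expand_tree t) (expand_tree s) W \<noteq> 0"
    from dprod_mset_support[OF this] Br.IH show ?case by (auto simp: add.commute)
  qed
qed

lemma expand_RL_kernel: "k \<in> RL_kernel \<Longrightarrow> expand k W = 0"
  unfolding RL_kernel_def
proof (induction arbitrary: W rule: ideal_gen.induct)
  case (base x)
  then consider (alt) u where "x = br u u"
    | (jacobi) u v w where "x = br u (br v w) + br v (br w u) + br w (br u v)"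
    | (repeat) ys where "x = rnorm ys" "2 \<le> length ys" "\<not> distinct ys"
    unfolding RL_rels_def by blast
  then show ?case
  proof cases
    case alt
    then show ?thesis by (simp add: expand_br dbr_self)
  next
    case jacobi
    then show ?thesis by (simp add: expand_add expand_br dbr_jacobi)
  next
    case repeat
    then have "ys \<noteq> []" by auto
    show ?thesis
    proof (rule ccontr)
      assume "expand x W \<noteq> 0"
      then have "expand_tree (rnorm_tree ys) W \<noteq> 0"
        using repeat \<open>ys \<noteq> []\<close> by (simp add: rnorm_eq_frag_of_rnorm_tree expand_frag_of)
      from expand_tree_support[OF this] have "mset W = mset ys" "distinct W"
        using \<open>ys \<noteq> []\<close> by (auto simp: leaves_rnorm_tree)
      then show False using repeat(3) by (metis mset_eq_imp_distinct_iff)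
    qed
  qed
next
  case (left x z)
  then have "expand x = (\<lambda>_. 0)" by auto
  then show ?case by (simp add: expand_br dbr_def dprod_def)
next
  case (right x z)
  then have "expand x = (\<lambda>_. 0)" by auto
  then show ?case by (simp add: expand_br dbr_def dprod_def)
qed (simp_all add: expand_add expand_minus)

lemma expand_rnorm_tree:
  "distinct L \<Longrightarrow> L \<noteq> [] \<Longrightarrow> W \<noteq> [] \<Longrightarrow> last W = last L \<Longrightarrow>
   expand_tree (rnorm_tree L) W = (if W = L then 1 else 0)"
proof (induction L arbitrary: W rule: rnorm_tree.induct)
  case (3 x y xs)
  let ?f = "expand_tree (rnorm_tree (y # xs))"
  have last_W: "last W \<noteq> x"
    using 3 by (metis distinct.simps(2) last.simps last_in_set list.discI)
  then have "dprod ?f (letter x) W = 0"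
    by (simp add: dprod_def cprod_letter_right)
  moreover have "dprod (letter x) ?f W = (if W = x # y # xs then 1 else 0)"
  proof (cases W)
    case Nil
    then show ?thesis using 3 by simp
  next
    case (Cons z W')
    show ?thesis
    proof (cases "z = x")
      case True
      then have "W' \<noteq> []" using last_W Cons by auto
      then have "?f W' = (if W' = y # xs then 1 else 0)"
        using 3 Cons by (intro "3.IH") auto
      then show ?thesis using Cons True 3 by (auto simp: dprod_def cprod_letter_left simp del: cprod.simps)
    next
      case False
      then show ?thesis using Cons by (auto simp: dprod_def cprod_letter_left simp del: cprod.simps)
    qed
  qed
  ultimately show ?case by (simp add: dbr_def)
qed (auto simp: letter_def)

definition anchor :: "'a set \<Rightarrow> 'a" where
  "anchor S = (SOME z. z \<in> S)"

definition anchored :: "'a set \<Rightarrow> 'a list \<Rightarrow> bool" where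
  "anchored A W \<longleftrightarrow> W \<noteq> [] \<and> set W \<subseteq> A \<and> last W = anchor (set W)"

definition normal_words :: "'a set \<Rightarrow> 'a list set" where
  "normal_words A = {W. anchored A W \<and> distinct W}"

lemma finite_normal_words: "finite A \<Longrightarrow> finite (normal_words A)"
  by (rule finite_subset[OF _ finite_subset_distinct[of A]]) (auto simp: normal_words_def anchored_def)

definition normal_form :: "'a set \<Rightarrow> 'a magring \<Rightarrow> 'a magring" where
  "normal_form A p = (\<Sum>W\<in>normal_words A. Poly_Mapping.single (rnorm_tree W) (expand p W))"

lemma normal_form_add: "normal_form A (p + q) = normal_form A p + normal_form A q"
  by (simp add: normal_form_def expand_add single_add sum.distrib)

lemma normal_form_minus: "normal_form A (- p) = - normal_form A p"
  by (simp add: normal_form_def expand_minus single_uminus sum_negf)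

lemma normal_form_diff: "normal_form A (p - q) = normal_form A p - normal_form A q"
  using normal_form_add[of A p "- q"] normal_form_minus[of A q] by simp

lemma normal_form_RL_kernel: "k \<in> RL_kernel \<Longrightarrow> normal_form A k = 0"
  by (simp add: normal_form_def expand_RL_kernel)

lemma normal_form_rnorm:
  assumes "finite A" and "L \<in> normal_words A"
  shows "normal_form A (rnorm L) = rnorm L"
proof -
  have L: "L \<noteq> []" "distinct L" "set L \<subseteq> A" "last L = anchor (set L)"
    using assms(2) by (auto simp: normal_words_def anchored_def)
  have other_words: "expand_tree (rnorm_tree L) W = 0" if "W \<in> normal_words A - {L}" for W
  proof (rule ccontr)
    assume nonzero: "expand_tree (rnorm_tree L) W \<noteq> 0"
    from expand_tree_support[OF this] have "mset W = mset L"
      using L by (simp add: leaves_rnorm_tree)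
    then have "set W = set L" by (metis set_mset_mset)
    then have "last W = last L" using that L by (auto simp: normal_words_def anchored_def)
    then have "expand_tree (rnorm_tree L) W = 0"
      using that L by (subst expand_rnorm_tree) (auto simp: normal_words_def anchored_def)
    with nonzero show False by simp
  qed
  have "normal_form A (rnorm L) = Poly_Mapping.single (rnorm_tree L) (expand_tree (rnorm_tree L) L)
      + (\<Sum>W\<in>normal_words A - {L}.
           Poly_Mapping.single (rnorm_tree W) (expand_tree (rnorm_tree L) W))"
    unfolding normal_form_def using L
    by (simp add: rnorm_eq_frag_of_rnorm_tree expand_frag_of
        sum.remove[OF finite_normal_words[OF assms(1)] assms(2)])
  also have "\<dots> = frag_of (rnorm_tree L)"
    using other_words expand_rnorm_tree[OF L(2,1,1) refl] by simp
  finally show ?thesis using L by (simp add: rnorm_eq_frag_of_rnorm_tree)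
qed

text \<open>Words with a repeated letter need not be normal: their brackets lie in the kernel.\<close>
lemma rnorm_span_normal_form:
  assumes "p \<in> rnorm_span (anchored A)"
    and "finite A"
  shows "p - normal_form A p \<in> RL_kernel"
  using assms(1)
proof (induction rule: rnorm_span.induct)
  case (kernel k)
  then show ?case by (simp add: normal_form_RL_kernel)
next
  case (rnorm L)
  show ?case
  proof (cases "distinct L")
    case True
    with rnorm have "L \<in> normal_words A" by (simp add: normal_words_def)
    then show ?thesis by (simp add: normal_form_rnorm[OF assms(2)] RL_kernel_zero)
  next
    case False
    with rnorm have "2 \<le> length L" by (cases L rule: rnorm_tree.cases) (auto simp: anchored_def)
    with False have "rnorm L \<in> RL_kernel"
      by (intro RL_rels_in_RL_kernel) (unfold RL_rels_def, blast)
    then show ?thesis by (simp add: normal_form_RL_kernel)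
  qed
next
  case (add p q)
  have "p + q - normal_form A (p + q) = (p - normal_form A p) + (q - normal_form A q)"
    by (simp add: normal_form_add)
  then show ?case using add RL_kernel_add by metis
next
  case (neg p)
  have "- p - normal_form A (- p) = - (p - normal_form A p)"
    by (simp add: normal_form_minus)
  then show ?case using neg RL_kernel_minus by metis
qed

lemma frag_of_minus_normal_form:
  assumes "finite A" and "set (leaves t) \<subseteq> A"
  shows "frag_of t - normal_form A (frag_of t) \<in> RL_kernel"
proof -
  have "anchor (set (leaves t)) \<in> set (leaves t)"
    using leaves_nonempty[of t] by (simp add: anchor_def some_in_eq)
  from frag_of_in_rnorm_span[OF this] have "frag_of t \<in> rnorm_span (anchored A)"
  proof (rule rnorm_span_mono)
    fix L
    assume L: "L \<noteq> [] \<and> last L = anchor (set (leaves t)) \<and> mset L = mset (leaves t)"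
    then have "set L = set (leaves t)" by (metis set_mset_mset)
    with L assms(2) show "anchored A L" by (simp add: anchored_def)
  qed
  from rnorm_span_normal_form[OF this assms(1)] show ?thesis .
qed

lemma minus_normal_form_RL_kernel:
  assumes "finite A" and "Poly_Mapping.keys u \<subseteq> {t. set (leaves t) \<subseteq> A}"
  shows "u - normal_form A u \<in> RL_kernel"
  using assms(2)
proof (induction u rule: frag_induction)
  case zero
  then show ?case by (simp add: normal_form_RL_kernel[OF RL_kernel_zero] RL_kernel_zero)
next
  case (one t)
  then show ?case using frag_of_minus_normal_form[OF assms(1)] by simp
next
  case (diff a b)
  have "a - b - normal_form A (a - b) = (a - normal_form A a) - (b - normal_form A b)"
    by (simp add: normal_form_diff)
  then show ?case using diff RL_kernel_diff by metis
qed

lemma rnorm_in_RL_lie_ideal_gen: "y \<in> set L \<Longrightarrow> rnorm L \<in> RL_lie_ideal_gen y"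
  unfolding RL_lie_ideal_gen_def
proof (induction L rule: rnorm.induct)
  case (3 x z zs)
  show ?case
  proof (cases "y \<in> set (z # zs)")
    case True
    then show ?thesis using 3 by (simp add: ideal_gen.left)
  next
    case False
    then show ?thesis using 3 by (simp add: ideal_gen.right ideal_gen.base)
  qed
qed (auto intro: ideal_gen.base)

lemma expand_vanishes_off_centralized_letter:
  assumes "br u (gen y) \<in> RL_kernel" and "W \<noteq> []" "distinct W" "y \<notin> set W"
  shows "expand u W = 0"
proof -
  obtain w W' where W: "W = w # W'" and "w \<noteq> y"
    using assms(2,4) by (cases W) auto
  have "dbr (expand u) (letter y) (W @ [y]) = 0"
    using expand_RL_kernel[OF assms(1)] by (simp add: expand_br gen_def expand_frag_of)
  moreover have "dprod (letter y) (expand u) (W @ [y]) = 0"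
    using assms(3,4) W \<open>w \<noteq> y\<close> by (simp add: dprod_def cprod_letter_left del: cprod.simps)
  moreover have "dprod (expand u) (letter y) (W @ [y]) = expand u W"
    using assms(3,4) by (simp add: dprod_def cprod_letter_right del: cprod.simps)
  ultimately show ?thesis by (simp add: dbr_def)
qed

lemma normal_form_in_RL_lie_ideal_gen:
  assumes "br u (gen y) \<in> RL_kernel"
  shows "normal_form A u \<in> RL_lie_ideal_gen y"
  unfolding normal_form_def
proof (rule ideal_gen_sum[where S = "insert (gen y) RL_kernel", folded RL_lie_ideal_gen_def])
  fix W
  assume W: "W \<in> normal_words A"
  show "Poly_Mapping.single (rnorm_tree W) (expand u W) \<in> RL_lie_ideal_gen y"
  proof (cases "y \<in> set W")
    case True
    then have "W \<noteq> []" by auto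
    then have "frag_of (rnorm_tree W) \<in> RL_lie_ideal_gen y"
      using rnorm_in_RL_lie_ideal_gen[OF True] by (simp add: rnorm_eq_frag_of_rnorm_tree)
    then show ?thesis
      unfolding RL_lie_ideal_gen_def by (rule single_in_ideal_gen)
  next
    case False
    with W assms have "expand u W = 0"
      by (intro expand_vanishes_off_centralized_letter) (auto simp: normal_words_def anchored_def)
    then show ?thesis by (simp add: RL_lie_ideal_gen_def ideal_gen.zero)
  qed
qed

lemma RL_centralizer_subset_RL_lie_ideal_gen:
  "RL_centralizer y \<subseteq> RL_lie_ideal_gen y"
proof
  fix u
  assume u: "u \<in> RL_centralizer y"
  define A where "A = (\<Union>t\<in>Poly_Mapping.keys u. set (leaves t))"
  have "u - normal_form A u \<in> RL_lie_ideal_gen y"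
    unfolding RL_lie_ideal_gen_def A_def
    by (intro ideal_gen.base insertI2 minus_normal_form_RL_kernel) auto
  moreover have "normal_form A u \<in> RL_lie_ideal_gen y"
    using u by (intro normal_form_in_RL_lie_ideal_gen) (simp add: RL_centralizer_def)
  ultimately have "(u - normal_form A u) + normal_form A u \<in> RL_lie_ideal_gen y"
    unfolding RL_lie_ideal_gen_def by (rule ideal_gen.add)
  then show "u \<in> RL_lie_ideal_gen y" by simp
qed

theorem lemma2p17:
  fixes y :: 'a
  shows "RL_centralizer y = RL_lie_ideal_gen y"
proof (rule equalityI)
  show "RL_centralizer y \<subseteq> RL_lie_ideal_gen y"
    by (rule RL_centralizer_subset_RL_lie_ideal_gen)
  have "RL_lie_ideal_gen y \<subseteq> rnorm_span_ending y"
    by (rule RL_lie_ideal_gen_subset_rnorm_span_ending)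
  also have "\<dots> \<subseteq> RL_centralizer y"
    by (rule rnorm_span_ending_subset_RL_centralizer)
  finally show "RL_lie_ideal_gen y \<subseteq> RL_centralizer y" .
qed

end
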